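(* Let $(Y_t,\lambda_t)_t$ be a strictly stationary INARCH(1) process, i.e. conditionally on the past $Y_t\sim\mathrm{Pois}(\lambda_t)$ with $\lambda_t=aY_{t-1}+b_0$, where $a\in(0,1)$ and $b_0\ge0$, and let $Y_0,\ldots,Y_n$ be observations of it. Define $w_t=\big(t-\frac{n+1}{2}\big)\big/\sqrt{\sum_{s=1}^n\big(s-\frac{n+1}{2}\big)^2}$ and $\widehat\theta_1=\sum_{t=1}^n w_tY_t$. Then, with $\sigma^2=b_0/(1-a)^3$, \[\widehat\theta_1\xrightarrow{d}\mathcal N(0,\sigma^2)\qquad (n\to\infty).\]
   Context: $\mathrm{Pois}(0)$ denotes the Dirac measure at $0$; "conditionally on the past" means conditionally on $\sigma(Y_s,\lambda_s: s<t)$. *)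

theory Defs
  imports "HOL-Probability.Probability"
begin

definition pois_prob :: "real \<Rightarrow> nat \<Rightarrow> real" where
  "pois_prob r k = (if r = 0 then (if k = 0 then 1 else 0) else pmf (poisson_pmf r) k)"

definition past :: "'a measure \<Rightarrow> (int \<Rightarrow> 'a \<Rightarrow> nat) \<Rightarrow> (int \<Rightarrow> 'a \<Rightarrow> real) \<Rightarrow> int \<Rightarrow> 'a measure" where
  "past M Y lam t = sigma (space M)
     (\<Union>s\<in>{..<t}. {Y s -` A \<inter> space M | A. True} \<union> {lam s -` B \<inter> space M | B. B \<in> sets borel})"

definition normal_law :: "real \<Rightarrow> real measure" where
  "normal_law s2 = (if s2 = 0 then return borel 0 else density lborel (normal_density 0 (sqrt s2)))"

definition trend_weight :: "nat \<Rightarrow> nat \<Rightarrow> real" where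
  "trend_weight n t = (real t - (real n + 1) / 2) /
      sqrt (\<Sum>s=1..n. (real s - (real n + 1) / 2)^2)"

end

theory Submission
  imports Defs "HOL-Real_Asymp.Real_Asymp"
begin

(*
  Conditioning on the past gives E[exp(w Y_t) | past] = exp(lambda_t (e^w - 1)) with
  lambda_t = a Y_(t-1) + b0, so peeling off Y_n, Y_(n-1), ... one at a time computes the
  characteristic function of sum_t u_t Y_t exactly:

    E exp(i sum_t u_t Y_t) = E exp(z_1 Y_1) * exp(b0 sum_(t>=2) (e^(z_t) - 1)),

  where z_n = i u_n and z_t = i u_t + a (e^(z_(t+1)) - 1).  For the trend weights
  u_t = s w_t, which are O(n^(-1/2)) and change by O(n^(-3/2)) from one t to the next, z_t
  stays close to i u_t / (1 - a).  Expanding e^z - 1 to second order and using the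
  telescoping identity sum_(t>=2) z_t = a sum_(t>=2) (e^(z_t) - 1) - z_1, which holds because
  sum_t u_t = 0, gives sum_(t>=2) (e^(z_t) - 1) -> -s^2 / (2 (1 - a)^3), while z_1 -> 0.
  Levy's continuity theorem concludes.
*)

lemma norm_exp_minus_one_minus_le:
  fixes z :: "'a::{banach,real_normed_field}"
  assumes "norm z \<le> 1"
  shows "norm (exp z - 1 - z) \<le> 3 * norm z ^ 2"
proof -
  have "norm (exp z - (\<Sum>i\<le>1. z ^ i / fact i)) \<le> exp (norm z) * norm z ^ Suc 1 / fact 1"
    by (rule Taylor_exp_field)
  then have "norm (exp z - 1 - z) \<le> exp (norm z) * norm z ^ 2"
    by (simp add: diff_diff_eq numeral_2_eq_2)
  also have "\<dots> \<le> 3 * norm z ^ 2"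
    using assms exp_le by (intro mult_right_mono) (auto intro: order_trans)
  finally show ?thesis .
qed

lemma norm_exp_minus_taylor2_le:
  fixes z :: "'a::{banach,real_normed_field}"
  assumes "norm z \<le> 1"
  shows "norm (exp z - 1 - z - z ^ 2 / 2) \<le> 2 * norm z ^ 3"
proof -
  have "norm (exp z - (\<Sum>i\<le>2. z ^ i / fact i)) \<le> exp (norm z) * norm z ^ Suc 2 / fact 2"
    by (rule Taylor_exp_field)
  then have "norm (exp z - 1 - z - z ^ 2 / 2) \<le> exp (norm z) * norm z ^ 3 / 2"
    by (simp add: diff_diff_eq numeral_2_eq_2 numeral_3_eq_3 add.assoc)
  also have "\<dots> \<le> 3 * norm z ^ 3 / 2"
    using assms exp_le by (intro divide_right_mono mult_right_mono) (auto intro: order_trans)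
  finally show ?thesis
    using zero_le_power[OF norm_ge_zero, of z 3] by linarith
qed

lemma norm_exp_minus_one_le:
  fixes z :: "'a::{banach,real_normed_field}"
  assumes "norm z \<le> 1"
  shows "norm (exp z - 1) \<le> norm z + 3 * norm z ^ 2"
  using norm_exp_minus_one_minus_le[OF assms] norm_triangle_ineq[of "exp z - 1 - z" z] by simp

function backward_exponent :: "real \<Rightarrow> (nat \<Rightarrow> real) \<Rightarrow> nat \<Rightarrow> nat \<Rightarrow> complex" where
  "backward_exponent a u n t =
     (if t < n then \<i> * of_real (u t) + of_real a * (exp (backward_exponent a u n (Suc t)) - 1)
      else \<i> * of_real (u t))"
  by auto
termination by (relation "Wellfounded.measure (\<lambda>(a, u, n, t). n - t)") auto

declare backward_exponent.simps [simp del]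

lemma backward_exponent_last: "backward_exponent a u n n = \<i> * of_real (u n)"
  by (simp add: backward_exponent.simps)

lemma backward_exponent_step:
  "t < n \<Longrightarrow> backward_exponent a u n t
     = \<i> * of_real (u t) + of_real a * (exp (backward_exponent a u n (Suc t)) - 1)"
  by (simp add: backward_exponent.simps)

lemma Re_backward_exponent_nonpos: "0 \<le> a \<Longrightarrow> Re (backward_exponent a u n t) \<le> 0"
proof (induction a u n t rule: backward_exponent.induct)
  case (1 a u n t)
  show ?case
  proof (cases "t < n")
    case True
    let ?w = "backward_exponent a u n (Suc t)"
    have "Re (exp ?w) \<le> exp (Re ?w)"
      using complex_Re_le_cmod[of "exp ?w"] by simp
    also have "\<dots> \<le> 1"
      using 1 True by simp
    finally have "Re (exp ?w) \<le> 1" .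
    then show ?thesis
      using True "1.prems" by (auto simp: backward_exponent_step intro!: mult_nonneg_nonpos)
  qed (simp add: backward_exponent.simps)
qed

lemma sum_le_of_contraction:
  fixes x :: "nat \<Rightarrow> real"
  assumes "m \<le> n" and "0 \<le> a" and "0 \<le> x m"
    and step: "\<And>t. m \<le> t \<Longrightarrow> t < n \<Longrightarrow> x t \<le> a * x (Suc t) + c"
  shows "(1 - a) * (\<Sum>t=m..n. x t) \<le> x n + real (n - m) * c"
proof -
  have "(\<Sum>t\<in>{m..<n}. x t) \<le> (\<Sum>t\<in>{m..<n}. a * x (Suc t) + c)"
    using step by (intro sum_mono) auto
  also have "\<dots> = a * (\<Sum>t=Suc m..n. x t) + real (n - m) * c"
    using sum.shift_bounds_Suc_ivl[of "\<lambda>t. a * x t" m n]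
    by (simp add: sum.distrib sum_distrib_left atLeastLessThanSuc_atLeastAtMost)
  also have "\<dots> \<le> a * (\<Sum>t=m..n. x t) + real (n - m) * c"
    using assms by (simp add: sum.atLeast_Suc_atMost mult_left_mono)
  finally have "(\<Sum>t\<in>{m..<n}. x t) \<le> a * (\<Sum>t=m..n. x t) + real (n - m) * c" .
  moreover have "(\<Sum>t=m..n. x t) = (\<Sum>t\<in>{m..<n}. x t) + x n"
    using assms(1)
    by (simp add: sum.last_plus atLeastLessThanSuc_atLeastAtMost[symmetric] add.commute)
  ultimately show ?thesis
    by (simp add: algebra_simps)
qed

locale slowly_varying_weights =
  fixes a :: real and n :: nat and u :: "nat \<Rightarrow> real" and U d :: real
  assumes a_nonneg: "0 \<le> a" and a_less_1: "a < 1" and n_ge_2: "2 \<le> n"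
    and sum_u: "(\<Sum>t=1..n. u t) = 0"
    and abs_u_le: "\<And>t. 1 \<le> t \<Longrightarrow> t \<le> n \<Longrightarrow> \<bar>u t\<bar> \<le> U"
    and abs_u_diff_le: "\<And>t. 1 \<le> t \<Longrightarrow> t < n \<Longrightarrow> \<bar>u (Suc t) - u t\<bar> \<le> d"
    and U_small: "12 * U \<le> (1 - a)\<^sup>2"
begin

abbreviation z :: "nat \<Rightarrow> complex" where
  "z \<equiv> backward_exponent a u n"

definition K :: real where
  "K = 1 / (1 - a)"

definition B :: real where
  "B = 2 * K * U"

(* The solution of the linearised recursion z = i u + a z for constant u. *)
definition zlin :: "nat \<Rightarrow> complex" where
  "zlin t = \<i> * of_real (K * u t)"

lemma K_ge_1: "1 \<le> K"
  using a_nonneg a_less_1 by (simp add: K_def)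

lemma one_minus_a_times_K: "(1 - a) * K = 1"
  using a_less_1 by (simp add: K_def)

lemma U_nonneg: "0 \<le> U"
  using abs_u_le[of n] n_ge_2 by linarith

lemma B_nonneg: "0 \<le> B"
  using K_ge_1 U_nonneg by (simp add: B_def)

lemma KU_eq: "K * U = B / 2"
  by (simp add: B_def)

lemma U_le_KU: "U \<le> K * U"
  using K_ge_1 U_nonneg by (simp add: mult_right_mono[of 1 K U, simplified])

lemma le_K_power_mult: "0 \<le> x \<Longrightarrow> x \<le> K ^ k * x"
  using K_ge_1 one_le_power[of K k] mult_right_mono[of 1 "K ^ k" x] by simp

lemma le_K_mult: "(1 - a) * x \<le> y \<Longrightarrow> x \<le> K * y"
  using mult_left_mono[of "(1 - a) * x" y K] K_ge_1 one_minus_a_times_K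
  by (simp add: mult.assoc[symmetric] mult.commute[of K])

lemma B_le_1: "B \<le> 1"
proof -
  have "(1 - a)\<^sup>2 \<le> 1 - a"
    using a_nonneg a_less_1 by (simp add: power2_eq_square mult_left_le_one_le)
  then have "12 * U \<le> 1 - a"
    using U_small by linarith
  then show ?thesis
    using a_less_1 U_nonneg by (simp add: B_def K_def field_simps)
qed

lemma B_stable: "U + a * (B + 3 * B\<^sup>2) \<le> B"
proof -
  have "12 * a * K\<^sup>2 * U \<le> 12 * K\<^sup>2 * U"
    using a_less_1 U_nonneg by (simp add: mult_right_mono)
  also have "\<dots> \<le> 1"
    using U_small a_less_1 by (simp add: K_def field_simps)
  finally have "12 * a * K\<^sup>2 * U \<le> 1" .
  then have "U * (12 * a * K\<^sup>2 * U) \<le> U"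
    using U_nonneg by (simp add: mult_left_le)
  then have "3 * a * B\<^sup>2 \<le> U"
    by (simp add: B_def power2_eq_square algebra_simps)
  moreover have "U + a * B = B - U"
  proof -
    have aK: "a * K = K - 1"
      using one_minus_a_times_K by (simp add: algebra_simps)
    have "U + a * B = U + 2 * U * (a * K)"
      by (simp add: B_def algebra_simps)
    also have "\<dots> = B - U"
      unfolding aK by (simp add: B_def algebra_simps)
    finally show ?thesis .
  qed
  ultimately show ?thesis
    by (simp add: algebra_simps)
qed

lemma norm_z_le:
  assumes "1 \<le> t" "t \<le> n"
  shows "cmod (z t) \<le> B"
  using assms(2)
proof (induction rule: inc_induct)
  case base
  then show ?case
    using abs_u_le[of n] n_ge_2 U_le_KU B_nonneg
    by (simp add: backward_exponent_last norm_mult KU_eq)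
next
  case (step s)
  have "cmod (exp (z (Suc s)) - 1) \<le> cmod (z (Suc s)) + 3 * (cmod (z (Suc s)))\<^sup>2"
    using step.IH B_le_1 by (intro norm_exp_minus_one_le) simp
  also have "\<dots> \<le> B + 3 * B\<^sup>2"
    using step.IH by (intro add_mono mult_left_mono power_mono) auto
  finally have exp_le: "cmod (exp (z (Suc s)) - 1) \<le> B + 3 * B\<^sup>2" .
  have "cmod (z s) \<le> \<bar>u s\<bar> + a * cmod (exp (z (Suc s)) - 1)"
    using step a_nonneg
      norm_triangle_ineq[of "\<i> * of_real (u s)" "of_real a * (exp (z (Suc s)) - 1)"]
    by (simp add: backward_exponent_step norm_mult)
  also have "\<dots> \<le> \<bar>u s\<bar> + a * (B + 3 * B\<^sup>2)"
    using exp_le a_nonneg by (simp add: mult_left_mono)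
  also have "\<dots> \<le> B"
    using abs_u_le[of s] assms(1) step B_stable by simp
  finally show ?case .
qed

lemma norm_zlin_le:
  assumes "1 \<le> t" "t \<le> n"
  shows "cmod (zlin t) \<le> B"
proof -
  have "cmod (zlin t) = K * \<bar>u t\<bar>"
    using K_ge_1 by (simp add: zlin_def norm_mult abs_mult)
  also have "\<dots> \<le> K * U"
    using abs_u_le[OF assms] K_ge_1 by simp
  finally show ?thesis
    using KU_eq B_nonneg by simp
qed

lemma norm_z_minus_zlin_last_le: "cmod (z n - zlin n) \<le> B"
proof -
  have "z n - zlin n = \<i> * of_real ((1 - K) * u n)"
    by (simp add: backward_exponent_last zlin_def algebra_simps)
  then have "cmod (z n - zlin n) = \<bar>(1 - K) * u n\<bar>"
    by (simp only: norm_mult norm_ii norm_of_real mult_1)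
  also have "\<dots> = (K - 1) * \<bar>u n\<bar>"
    using K_ge_1 by (simp add: abs_mult)
  also have "\<dots> \<le> K * U"
    using abs_u_le[of n] n_ge_2 K_ge_1 by (intro mult_mono) auto
  finally show ?thesis
    using KU_eq B_nonneg by simp
qed

lemma norm_z_minus_zlin_step_le:
  assumes "1 \<le> t" "t < n"
  shows "cmod (z t - zlin t) \<le> a * cmod (z (Suc t) - zlin (Suc t)) + (3 * B\<^sup>2 + K * d)"
proof -
  let ?w = "z (Suc t)"
  let ?r = "of_real a * (?w - zlin (Suc t)) + of_real a * (exp ?w - 1 - ?w)
      + \<i> * of_real (a * K * (u (Suc t) - u t))"
  have "(1 - complex_of_real a) * complex_of_real K = 1"
    using one_minus_a_times_K by (metis of_real_1 of_real_diff of_real_mult)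
  moreover have "z t - zlin t - ?r = \<i> * of_real (u t) * (1 - (1 - of_real a) * of_real K)"
    using assms(2) by (simp add: backward_exponent_step zlin_def algebra_simps)
  ultimately have r_eq: "z t - zlin t = ?r"
    by simp
  have "cmod (z t - zlin t) \<le> cmod (of_real a * (?w - zlin (Suc t)))
      + cmod (of_real a * (exp ?w - 1 - ?w)) + cmod (\<i> * of_real (a * K * (u (Suc t) - u t)))"
    unfolding r_eq
    using norm_triangle_ineq[of "of_real a * (?w - zlin (Suc t)) + of_real a * (exp ?w - 1 - ?w)"
        "\<i> * of_real (a * K * (u (Suc t) - u t))"]
      norm_triangle_ineq[of "of_real a * (?w - zlin (Suc t))" "of_real a * (exp ?w - 1 - ?w)"]
    by linarith
  also have "\<dots> = a * cmod (?w - zlin (Suc t)) + a * cmod (exp ?w - 1 - ?w)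
      + a * (K * \<bar>u (Suc t) - u t\<bar>)"
    using a_nonneg K_ge_1 by (simp only: norm_mult norm_ii norm_of_real mult_1 abs_mult)
  finally have "cmod (z t - zlin t) \<le> a * cmod (?w - zlin (Suc t)) + a * cmod (exp ?w - 1 - ?w)
      + a * (K * \<bar>u (Suc t) - u t\<bar>)" .
  moreover have "a * cmod (exp ?w - 1 - ?w) \<le> 3 * B\<^sup>2"
  proof -
    have "cmod ?w \<le> B"
      using norm_z_le assms by simp
    then have "cmod (exp ?w - 1 - ?w) \<le> 3 * B\<^sup>2"
      using norm_exp_minus_one_minus_le[of ?w] B_le_1 power_mono[of "cmod ?w" B 2] by simp
    moreover have "a * cmod (exp ?w - 1 - ?w) \<le> cmod (exp ?w - 1 - ?w)"
      using a_nonneg a_less_1 by (intro mult_left_le_one_le) auto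
    ultimately show ?thesis
      using B_nonneg by linarith
  qed
  moreover have "a * (K * \<bar>u (Suc t) - u t\<bar>) \<le> K * d"
  proof -
    have "a * (K * \<bar>u (Suc t) - u t\<bar>) \<le> K * \<bar>u (Suc t) - u t\<bar>"
      using a_nonneg a_less_1 K_ge_1 by (intro mult_left_le_one_le) auto
    also have "\<dots> \<le> K * d"
      using abs_u_diff_le[OF assms] K_ge_1 by (intro mult_left_mono) auto
    finally show ?thesis .
  qed
  ultimately show ?thesis
    by linarith
qed

lemma sum_norm_z_minus_zlin_le:
  "(\<Sum>t=2..n. cmod (z t - zlin t)) \<le> K\<^sup>2 * (B + real n * (3 * B\<^sup>2 + d))"
proof -
  have d_nonneg: "0 \<le> d"
    using abs_u_diff_le[of 1] n_ge_2 by fastforce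
  have "(1 - a) * (\<Sum>t=2..n. cmod (z t - zlin t))
      \<le> cmod (z n - zlin n) + real (n - 2) * (3 * B\<^sup>2 + K * d)"
    using n_ge_2 a_nonneg norm_z_minus_zlin_step_le by (intro sum_le_of_contraction) auto
  also have "\<dots> \<le> B + real n * (3 * B\<^sup>2 + K * d)"
    using norm_z_minus_zlin_last_le K_ge_1 d_nonneg by (intro add_mono mult_right_mono) auto
  also have "\<dots> = B + real n * (3 * B\<^sup>2) + K * (real n * d)"
    by (simp add: algebra_simps)
  also have "\<dots> \<le> K * B + K * (real n * (3 * B\<^sup>2)) + K * (real n * d)"
    using B_nonneg by (intro add_mono le_K_power_mult[where k=1, simplified]) auto
  finally have "(1 - a) * (\<Sum>t=2..n. cmod (z t - zlin t)) \<le> K * (B + real n * (3 * B\<^sup>2 + d))"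
    by (simp add: algebra_simps)
  then show ?thesis
    by (simp add: le_K_mult power2_eq_square mult.assoc)
qed

lemma sum_z_eq: "(\<Sum>t=2..n. z t) = of_real a * (\<Sum>t=2..n. exp (z t) - 1) - z 1"
proof -
  have "(\<Sum>t\<in>{1..<n}. z t)
      = \<i> * of_real (\<Sum>t\<in>{1..<n}. u t) + of_real a * (\<Sum>t\<in>{1..<n}. exp (z (Suc t)) - 1)"
    by (simp add: backward_exponent_step sum.distrib sum_distrib_left)
  also have "(\<Sum>t\<in>{1..<n}. exp (z (Suc t)) - 1) = (\<Sum>t=2..n. exp (z t) - 1)"
    using sum.shift_bounds_Suc_ivl[of "\<lambda>t. exp (z t) - 1" 1 n]
    by (simp add: atLeastLessThanSuc_atLeastAtMost numeral_2_eq_2)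
  finally have "(\<Sum>t=1..n. z t)
      = \<i> * of_real (\<Sum>t=1..n. u t) + of_real a * (\<Sum>t=2..n. exp (z t) - 1)"
    using n_ge_2
    by (simp add: sum.last_plus atLeastLessThanSuc_atLeastAtMost[symmetric] backward_exponent_last
        algebra_simps)
  moreover have "(\<Sum>t=1..n. z t) = z 1 + (\<Sum>t=2..n. z t)"
    using n_ge_2 by (simp add: sum.atLeast_Suc_atMost numeral_2_eq_2)
  ultimately show ?thesis
    using sum_u by (simp add: algebra_simps flip: of_real_sum)
qed

lemma norm_sum_square_diff_le:
  "cmod ((\<Sum>t=2..n. (z t)\<^sup>2) - (\<Sum>t=2..n. (zlin t)\<^sup>2)) \<le> 2 * B * (\<Sum>t=2..n. cmod (z t - zlin t))"
proof -
  have "cmod ((\<Sum>t=2..n. (z t)\<^sup>2) - (\<Sum>t=2..n. (zlin t)\<^sup>2)) \<le> (\<Sum>t=2..n. cmod ((z t)\<^sup>2 - (zlin t)\<^sup>2))"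
    unfolding sum_subtractf[symmetric] by (rule norm_sum)
  also have "\<dots> \<le> (\<Sum>t=2..n. 2 * B * cmod (z t - zlin t))"
  proof (intro sum_mono)
    fix t assume t: "t \<in> {2..n}"
    have "cmod (z t + zlin t) \<le> 2 * B"
      using norm_triangle_ineq[of "z t" "zlin t"] norm_z_le[of t] norm_zlin_le[of t] t by simp
    moreover have "(z t)\<^sup>2 - (zlin t)\<^sup>2 = (z t - zlin t) * (z t + zlin t)"
      by (simp add: power2_eq_square algebra_simps)
    ultimately show "cmod ((z t)\<^sup>2 - (zlin t)\<^sup>2) \<le> 2 * B * cmod (z t - zlin t)"
      by (simp add: norm_mult mult_left_mono mult.commute[of _ "cmod (z t - zlin t)"])
  qed
  finally show ?thesis
    by (simp add: sum_distrib_left)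
qed

lemma sum_zlin_square: "(\<Sum>t=2..n. (zlin t)\<^sup>2) = - of_real (K\<^sup>2 * ((\<Sum>t=1..n. (u t)\<^sup>2) - (u 1)\<^sup>2))"
proof -
  have "(\<Sum>t=1..n. (u t)\<^sup>2) = (u 1)\<^sup>2 + (\<Sum>t=2..n. (u t)\<^sup>2)"
    using n_ge_2 by (simp add: sum.atLeast_Suc_atMost numeral_2_eq_2)
  then show ?thesis
    by (simp add: zlin_def power_mult_distrib sum_distrib_left sum_negf)
qed

lemma norm_taylor_remainder_sum_le:
  "cmod (\<Sum>t=2..n. exp (z t) - 1 - z t - (z t)\<^sup>2 / 2) \<le> 2 * real n * B ^ 3"
proof -
  have "cmod (\<Sum>t=2..n. exp (z t) - 1 - z t - (z t)\<^sup>2 / 2) \<le> (\<Sum>t=2..n. 2 * B ^ 3)"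
  proof (intro order_trans[OF norm_sum] sum_mono)
    fix t assume t: "t \<in> {2..n}"
    then have "cmod (z t) \<le> B"
      using norm_z_le by simp
    then have "cmod (exp (z t) - 1 - z t - (z t)\<^sup>2 / 2) \<le> 2 * cmod (z t) ^ 3"
      using B_le_1 by (intro norm_exp_minus_taylor2_le) simp
    also have "\<dots> \<le> 2 * B ^ 3"
      using \<open>cmod (z t) \<le> B\<close> by (intro mult_left_mono power_mono) auto
    finally show "cmod (exp (z t) - 1 - z t - (z t)\<^sup>2 / 2) \<le> 2 * B ^ 3" .
  qed
  also have "\<dots> \<le> 2 * real n * B ^ 3"
    using B_nonneg by (simp add: mult_right_mono)
  finally show ?thesis .
qed

lemma one_minus_a_times_sum_exp_z:
  "of_real (1 - a) * ((\<Sum>t=2..n. exp (z t) - 1) + of_real (K ^ 3 * (\<Sum>t=1..n. (u t)\<^sup>2)) / 2)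
     = (\<Sum>t=2..n. exp (z t) - 1 - z t - (z t)\<^sup>2 / 2)
       + ((\<Sum>t=2..n. (z t)\<^sup>2) - (\<Sum>t=2..n. (zlin t)\<^sup>2)) / 2
       + of_real (K\<^sup>2 * (u 1)\<^sup>2) / 2 - z 1"
    (is "of_real (1 - a) * (?S + ?L) = ?R + (?Q - ?Qlin) / 2 + ?c1 / 2 - z 1")
proof -
  let ?c2 = "of_real (K\<^sup>2 * (\<Sum>t=1..n. (u t)\<^sup>2)) :: complex"
  have S_eq: "?S = (\<Sum>t=2..n. z t) + ?Q / 2 + ?R"
    by (simp add: sum_subtractf sum_divide_distrib)
  have aS_eq: "of_real a * ?S = (\<Sum>t=2..n. z t) + z 1"
    using sum_z_eq by simp
  have L_eq: "of_real (1 - a) * ?L = ?c2 / 2"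
    using one_minus_a_times_K
    by (simp only: of_real_mult[symmetric] times_divide_eq_right)
      (simp add: power3_eq_cube power2_eq_square mult.assoc[symmetric])
  have Qlin_eq: "?Qlin = ?c1 - ?c2"
    using sum_zlin_square by (simp add: algebra_simps)
  have "of_real (1 - a) * (?S + ?L) = ?S - of_real a * ?S + of_real (1 - a) * ?L"
    by (simp add: algebra_simps)
  also have "\<dots> = ((\<Sum>t=2..n. z t) + ?Q / 2 + ?R) - ((\<Sum>t=2..n. z t) + z 1) + ?c2 / 2"
    unfolding aS_eq L_eq by (subst S_eq) (rule refl)
  also have "\<dots> = ?R + (?Q - ?Qlin) / 2 + ?c1 / 2 - z 1"
    unfolding Qlin_eq by (simp add: field_simps)
  finally show ?thesis .
qed

lemma K_u1_square_le: "K\<^sup>2 * (u 1)\<^sup>2 \<le> B\<^sup>2 / 4"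
proof -
  have "(u 1)\<^sup>2 \<le> U\<^sup>2"
    using abs_u_le[of 1] n_ge_2 power_mono[of "\<bar>u 1\<bar>" U 2] by simp
  then have "K\<^sup>2 * (u 1)\<^sup>2 \<le> (K * U)\<^sup>2"
    by (simp add: power_mult_distrib mult_left_mono)
  then show ?thesis
    by (simp add: KU_eq power_divide)
qed

lemma one_minus_a_times_norm_sum_exp_z_le:
  "(1 - a) * cmod ((\<Sum>t=2..n. exp (z t) - 1) + of_real (K ^ 3 * (\<Sum>t=1..n. (u t)\<^sup>2)) / 2)
     \<le> 2 * real n * B ^ 3 + B * (K\<^sup>2 * (B + real n * (3 * B\<^sup>2 + d))) + B\<^sup>2 / 8 + B"
    (is "(1 - a) * cmod ?X \<le> _")
proof -
  let ?R = "\<Sum>t=2..n. exp (z t) - 1 - z t - (z t)\<^sup>2 / 2"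
  let ?D = "(\<Sum>t=2..n. (z t)\<^sup>2) - (\<Sum>t=2..n. (zlin t)\<^sup>2)"
  let ?c = "of_real (K\<^sup>2 * (u 1)\<^sup>2) / 2 :: complex"
  have "(1 - a) * cmod ?X = cmod (of_real (1 - a) * ?X)"
    using a_less_1 by (simp only: norm_mult norm_of_real abs_of_pos diff_gt_0_iff_gt)
  also have "\<dots> = cmod (?R + ?D / 2 + ?c - z 1)"
    unfolding one_minus_a_times_sum_exp_z ..
  also have "\<dots> \<le> cmod ?R + cmod ?D / 2 + cmod ?c + cmod (z 1)"
    using norm_triangle_ineq4[of "?R + ?D / 2 + ?c" "z 1"] norm_triangle_ineq[of "?R + ?D / 2" ?c]
      norm_triangle_ineq[of ?R "?D / 2"] norm_divide[of ?D 2]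
    by simp
  also have "cmod ?c = K\<^sup>2 * (u 1)\<^sup>2 / 2"
    by (simp only: norm_divide norm_of_real norm_numeral) simp
  also have "cmod ?D / 2 \<le> B * (K\<^sup>2 * (B + real n * (3 * B\<^sup>2 + d)))"
    using norm_sum_square_diff_le mult_left_mono[OF sum_norm_z_minus_zlin_le B_nonneg] by simp
  finally show ?thesis
    using norm_taylor_remainder_sum_le norm_z_le[of 1] n_ge_2 K_u1_square_le by simp
qed

lemma norm_sum_exp_z_plus_limit_le:
  "cmod ((\<Sum>t=2..n. exp (z t) - 1) + of_real ((\<Sum>t=1..n. (u t)\<^sup>2) / (2 * (1 - a) ^ 3)))
     \<le> K ^ 3 * (3 * B + 5 * real n * B ^ 3 + real n * B * d)"
proof -
  let ?X = "(\<Sum>t=2..n. exp (z t) - 1) + of_real (K ^ 3 * (\<Sum>t=1..n. (u t)\<^sup>2)) / 2"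
  let ?b = "3 * B + 5 * real n * B ^ 3 + real n * B * d"
  have "K\<^sup>2 * ?b = K\<^sup>2 * (2 * B + 2 * real n * B ^ 3) + K\<^sup>2 * (B - B\<^sup>2)
      + B * (K\<^sup>2 * (B + real n * (3 * B\<^sup>2 + d)))"
    by (simp add: algebra_simps power2_eq_square power3_eq_cube)
  moreover have "B\<^sup>2 \<le> B"
    using B_nonneg B_le_1 by (simp add: power2_eq_square mult_left_le_one_le)
  moreover have "0 \<le> K\<^sup>2 * (B - B\<^sup>2)"
    using \<open>B\<^sup>2 \<le> B\<close> by simp
  moreover have "2 * B + 2 * real n * B ^ 3 \<le> K\<^sup>2 * (2 * B + 2 * real n * B ^ 3)"
    using B_nonneg by (intro le_K_power_mult) simp
  ultimately have "(1 - a) * cmod ?X \<le> K\<^sup>2 * ?b"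
    using one_minus_a_times_norm_sum_exp_z_le B_nonneg by linarith
  moreover have "of_real (K ^ 3 * (\<Sum>t=1..n. (u t)\<^sup>2)) / 2
      = (of_real ((\<Sum>t=1..n. (u t)\<^sup>2) / (2 * (1 - a) ^ 3)) :: complex)"
    by (simp add: K_def power_one_over)
  ultimately have "(1 - a) * cmod ((\<Sum>t=2..n. exp (z t) - 1)
      + of_real ((\<Sum>t=1..n. (u t)\<^sup>2) / (2 * (1 - a) ^ 3))) \<le> K\<^sup>2 * ?b"
    by (simp only:)
  moreover have "K * (K\<^sup>2 * ?b) = K ^ 3 * ?b"
    by (simp add: power3_eq_cube power2_eq_square)
  ultimately show ?thesis
    using le_K_mult by metis
qed

end

definition trend_norm :: "nat \<Rightarrow> real" where
  "trend_norm n = sqrt (real n * ((real n)\<^sup>2 - 1) / 12)"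

lemma sum_index: "(\<Sum>s=1..n. real s) = real n * (real n + 1) / 2"
proof (induction n)
  case (Suc n)
  have "(\<Sum>s=1..Suc n. real s) = (\<Sum>s=1..n. real s) + real (Suc n)"
    by simp
  then show ?case
    using Suc by (simp add: field_simps)
qed simp

lemma sum_index_square: "(\<Sum>s=1..n. (real s)\<^sup>2) = real n * (real n + 1) * (2 * real n + 1) / 6"
proof (induction n)
  case (Suc n)
  have "(\<Sum>s=1..Suc n. (real s)\<^sup>2) = (\<Sum>s=1..n. (real s)\<^sup>2) + (real (Suc n))\<^sup>2"
    by simp
  then show ?case
    using Suc by (simp add: field_simps power2_eq_square)
qed simp

lemma sum_centered_index: "(\<Sum>s=1..n. real s - (real n + 1) / 2) = 0"
  unfolding sum_subtractf sum_index by simp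

lemma sum_centered_index_square:
  "(\<Sum>s=1..n. (real s - (real n + 1) / 2)\<^sup>2) = real n * ((real n)\<^sup>2 - 1) / 12"
proof -
  have "(\<Sum>s=1..n. (real s - (real n + 1) / 2)\<^sup>2)
      = (\<Sum>s=1..n. (real s)\<^sup>2 - (real n + 1) * real s + ((real n + 1) / 2)\<^sup>2)"
    by (intro sum.cong refl) (simp add: power2_diff algebra_simps)
  also have "\<dots> = (\<Sum>s=1..n. (real s)\<^sup>2) - (real n + 1) * (\<Sum>s=1..n. real s)
      + real n * ((real n + 1) / 2)\<^sup>2"
    by (simp add: sum.distrib sum_subtractf sum_distrib_left)
  also have "\<dots> = real n * ((real n)\<^sup>2 - 1) / 12"
    unfolding sum_index sum_index_square by (simp add: field_simps power2_eq_square)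
  finally show ?thesis .
qed

lemma trend_norm_eq: "trend_norm n = sqrt (\<Sum>s=1..n. (real s - (real n + 1) / 2)\<^sup>2)"
  unfolding trend_norm_def sum_centered_index_square ..

lemma trend_norm_nonneg: "0 \<le> trend_norm n"
  by (simp add: trend_norm_eq sum_nonneg)

lemma trend_norm_pos: "2 \<le> n \<Longrightarrow> 0 < trend_norm n"
proof -
  assume "2 \<le> n"
  then have "1 < real n * real n"
    using less_1_mult[of "real n" "real n"] by simp
  with \<open>2 \<le> n\<close> show ?thesis
    by (simp add: trend_norm_def power2_eq_square)
qed

lemma trend_weight_eq: "trend_weight n t = (real t - (real n + 1) / 2) / trend_norm n"
  by (simp add: trend_weight_def trend_norm_eq)

lemma sum_trend_weight: "(\<Sum>t=1..n. trend_weight n t) = 0"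
proof -
  have "(\<Sum>t=1..n. trend_weight n t) = (\<Sum>t=1..n. real t - (real n + 1) / 2) / trend_norm n"
    by (simp add: trend_weight_eq sum_divide_distrib)
  then show ?thesis
    by (simp only: sum_centered_index)
qed

lemma sum_trend_weight_square: "2 \<le> n \<Longrightarrow> (\<Sum>t=1..n. (trend_weight n t)\<^sup>2) = 1"
proof -
  assume "2 \<le> n"
  have "(\<Sum>t=1..n. (trend_weight n t)\<^sup>2)
      = (\<Sum>t=1..n. (real t - (real n + 1) / 2)\<^sup>2) / (trend_norm n)\<^sup>2"
    by (simp add: trend_weight_eq power_divide sum_divide_distrib)
  also have "\<dots> = 1"
    using trend_norm_pos[OF \<open>2 \<le> n\<close>] by (simp add: trend_norm_eq sum_nonneg)
  finally show ?thesis .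
qed

definition max_trend_weight :: "nat \<Rightarrow> real" where
  "max_trend_weight n = (real n - 1) / 2 / trend_norm n"

lemma abs_trend_weight_le:
  assumes "1 \<le> t" "t \<le> n"
  shows "\<bar>trend_weight n t\<bar> \<le> max_trend_weight n"
proof -
  have "\<bar>real t - (real n + 1) / 2\<bar> \<le> (real n - 1) / 2"
    using assms by (simp add: abs_le_iff field_simps)
  then have "\<bar>real t - (real n + 1) / 2\<bar> / trend_norm n \<le> (real n - 1) / 2 / trend_norm n"
    using trend_norm_nonneg by (rule divide_right_mono)
  then show ?thesis
    using trend_norm_nonneg[of n] by (simp add: trend_weight_eq abs_divide max_trend_weight_def)
qed

lemma trend_weight_Suc_diff: "trend_weight n (Suc t) - trend_weight n t = 1 / trend_norm n"
  by (simp add: trend_weight_eq diff_divide_distrib[symmetric])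

lemma trend_weight_asymptotics:
  "max_trend_weight \<longlonglongrightarrow> 0"
  "(\<lambda>n. real n * max_trend_weight n ^ 3) \<longlonglongrightarrow> 0"
  "(\<lambda>n. real n * max_trend_weight n / trend_norm n) \<longlonglongrightarrow> 0"
  unfolding max_trend_weight_def trend_norm_def by real_asymp+

lemma trend_weights_slowly_varying:
  assumes "0 \<le> a" "a < 1" "2 \<le> n" "12 * (\<bar>s\<bar> * max_trend_weight n) \<le> (1 - a)\<^sup>2"
  shows "slowly_varying_weights a n (\<lambda>t. s * trend_weight n t)
    (\<bar>s\<bar> * max_trend_weight n) (\<bar>s\<bar> / trend_norm n)"
proof
  show "(\<Sum>t=1..n. s * trend_weight n t) = 0"
    unfolding sum_distrib_left[symmetric] sum_trend_weight by simp
  show "\<bar>s * trend_weight n t\<bar> \<le> \<bar>s\<bar> * max_trend_weight n" if "1 \<le> t" "t \<le> n" for t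
    using abs_trend_weight_le[OF that] by (simp add: abs_mult mult_left_mono)
  show "\<bar>s * trend_weight n (Suc t) - s * trend_weight n t\<bar> \<le> \<bar>s\<bar> / trend_norm n" for t
    using trend_weight_Suc_diff[of n t] trend_norm_nonneg[of n]
    by (simp add: right_diff_distrib[symmetric] abs_mult)
qed (use assms in auto)

lemma eventually_trend_weights_slowly_varying:
  assumes "0 \<le> a" "a < 1"
  shows "eventually (\<lambda>n. slowly_varying_weights a n (\<lambda>t. s * trend_weight n t)
    (\<bar>s\<bar> * max_trend_weight n) (\<bar>s\<bar> / trend_norm n)) sequentially"
proof -
  have "(\<lambda>n. \<bar>s\<bar> * max_trend_weight n) \<longlonglongrightarrow> 0"
    using tendsto_mult_right_zero[OF trend_weight_asymptotics(1)] .
  moreover have "0 < (1 - a)\<^sup>2 / 12"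
    using assms by simp
  ultimately have "eventually (\<lambda>n. \<bar>s\<bar> * max_trend_weight n < (1 - a)\<^sup>2 / 12) sequentially"
    by (rule order_tendstoD)
  with eventually_ge_at_top[of 2] show ?thesis
    by eventually_elim (use assms in \<open>simp add: trend_weights_slowly_varying\<close>)
qed

lemma backward_exponent_trend_limits:
  fixes a s :: real
  assumes a: "0 \<le> a" "a < 1"
  defines "z n \<equiv> backward_exponent a (\<lambda>t. s * trend_weight n t) n"
  shows "(\<lambda>n. \<Sum>t=2..n. exp (z n t) - 1) \<longlonglongrightarrow> - of_real (s\<^sup>2 / (2 * (1 - a) ^ 3))"
    and "(\<lambda>n. z n 1) \<longlonglongrightarrow> 0"
proof -
  define K where K_eq: "K = 1 / (1 - a)"
  define U where "U n = \<bar>s\<bar> * max_trend_weight n" for n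
  define d where "d n = \<bar>s\<bar> / trend_norm n" for n
  define B where B_eq: "B n = 2 * K * U n" for n
  define bound where "bound n = K ^ 3 * (3 * B n + 5 * real n * B n ^ 3 + real n * B n * d n)" for n
  have U_lim: "U \<longlonglongrightarrow> 0"
    using tendsto_mult_right_zero[OF trend_weight_asymptotics(1)] by (simp add: U_def[abs_def])
  have B_lim: "B \<longlonglongrightarrow> 0"
    using tendsto_mult_right_zero[OF U_lim] by (simp add: B_eq[abs_def])
  have bound_eq: "bound = (\<lambda>n. K ^ 3 * (3 * B n
      + 40 * K ^ 3 * \<bar>s\<bar> ^ 3 * (real n * max_trend_weight n ^ 3)
      + 2 * K * s\<^sup>2 * (real n * max_trend_weight n / trend_norm n)))"
    by (simp add: fun_eq_iff bound_def B_eq U_def d_def power_mult_distrib power2_eq_square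
        algebra_simps)
  have "(\<lambda>n. K ^ 3 * (3 * B n
      + 40 * K ^ 3 * \<bar>s\<bar> ^ 3 * (real n * max_trend_weight n ^ 3)
      + 2 * K * s\<^sup>2 * (real n * max_trend_weight n / trend_norm n)))
      \<longlonglongrightarrow> K ^ 3 * (3 * 0 + 40 * K ^ 3 * \<bar>s\<bar> ^ 3 * 0 + 2 * K * s\<^sup>2 * 0)"
    by (intro tendsto_intros B_lim trend_weight_asymptotics)
  then have bound_lim: "bound \<longlonglongrightarrow> 0"
    by (simp add: bound_eq)
  have ev: "eventually (\<lambda>n.
      cmod ((\<Sum>t=2..n. exp (z n t) - 1) + of_real (s\<^sup>2 / (2 * (1 - a) ^ 3))) \<le> bound n
      \<and> cmod (z n 1) \<le> B n) sequentially"
    using eventually_trend_weights_slowly_varying[OF a, of s]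
    unfolding U_def[symmetric] d_def[symmetric]
  proof eventually_elim
    case (elim n)
    interpret slowly_varying_weights a n "\<lambda>t. s * trend_weight n t" "U n" "d n"
      by (fact elim)
    have KB: "slowly_varying_weights.K a = K" "slowly_varying_weights.B a (U n) = B n"
      by (simp_all add: K_def B_def K_eq B_eq)
    have sq: "(\<Sum>t=1..n. (s * trend_weight n t)\<^sup>2) = s\<^sup>2"
      using sum_trend_weight_square[OF n_ge_2]
      by (simp add: power_mult_distrib flip: sum_distrib_left)
    show ?case
      using norm_sum_exp_z_plus_limit_le norm_z_le[of 1] n_ge_2 unfolding KB sq z_def bound_def
      by simp
  qed
  have "(\<lambda>n. (\<Sum>t=2..n. exp (z n t) - 1) + of_real (s\<^sup>2 / (2 * (1 - a) ^ 3))) \<longlonglongrightarrow> 0"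
    using ev by (intro Lim_null_comparison[OF _ bound_lim]) (auto elim: eventually_mono)
  from tendsto_add[OF this tendsto_const[of "- of_real (s\<^sup>2 / (2 * (1 - a) ^ 3))"]]
  show "(\<lambda>n. \<Sum>t=2..n. exp (z n t) - 1) \<longlonglongrightarrow> - of_real (s\<^sup>2 / (2 * (1 - a) ^ 3))"
    by simp
  show "(\<lambda>n. z n 1) \<longlonglongrightarrow> 0"
    using ev by (intro Lim_null_comparison[OF _ B_lim]) (auto elim: eventually_mono)
qed

lemma real_distribution_normal_law: "0 \<le> v \<Longrightarrow> real_distribution (normal_law v)"
  unfolding normal_law_def real_distribution_def real_distribution_axioms_def
  by (auto intro: prob_space_return prob_space_normal_density)

lemma char_normal_law:
  assumes v: "0 \<le> v"
  shows "char (normal_law v) s = complex_of_real (exp (- (v * s\<^sup>2) / 2))"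
proof (cases "v = 0")
  case True
  then show ?thesis
    unfolding normal_law_def char_def by (simp add: integral_return)
next
  case False
  define \<sigma> where "\<sigma> = sqrt v"
  have \<sigma>: "0 < \<sigma>"
    using v False unfolding \<sigma>_def by simp
  interpret std_normal: prob_space std_normal_distribution
    by (rule prob_space_normal_density) simp
  have "distributed std_normal_distribution lborel (\<lambda>x. 0 + \<sigma> * x)
      (normal_density (0 + \<sigma> * 0) (\<bar>\<sigma>\<bar> * 1))"
    using \<sigma> by (intro std_normal.normal_density_affine) (auto simp: distributed_def distr_id2)
  then have law_eq: "normal_law v = distr std_normal_distribution lborel (\<lambda>x. \<sigma> * x)"
    using \<sigma> False by (simp add: distributed_def normal_law_def \<sigma>_def)
  have "char (normal_law v) s = (CLINT x|std_normal_distribution. iexp (s * (\<sigma> * x)))"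
    unfolding law_eq char_def by (subst integral_distr) auto
  also have "\<dots> = char std_normal_distribution (s * \<sigma>)"
    unfolding char_def by (simp add: mult.assoc)
  also have "\<dots> = complex_of_real (exp (- (v * s\<^sup>2) / 2))"
    using v by (simp add: char_std_normal_distribution power_mult_distrib \<sigma>_def mult.commute)
  finally show ?thesis .
qed

lemma norm_exp_ii_sum: "cmod (exp (\<Sum>t\<in>A. \<i> * of_real (f t))) = 1"
  by (simp add: Re_sum)

lemma integral_sums_dominated:
  fixes f :: "nat \<Rightarrow> 'a \<Rightarrow> 'b::{banach, second_countable_topology}"
  assumes f: "\<And>k. integrable M (f k)" and F: "F \<in> borel_measurable M" and w: "integrable M w"
    and sums: "AE x in M. (\<lambda>k. f k x) sums F x"
    and bound: "\<And>N. AE x in M. norm (\<Sum>k<N. f k x) \<le> w x"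
  shows "(\<lambda>k. integral\<^sup>L M (f k)) sums integral\<^sup>L M F"
proof -
  have "(\<lambda>N. integral\<^sup>L M (\<lambda>x. \<Sum>k<N. f k x)) \<longlonglongrightarrow> integral\<^sup>L M F"
    using f F w sums bound
    by (intro integral_dominated_convergence[where w=w]) (auto simp: sums_def)
  then show ?thesis
    using f by (simp add: sums_def)
qed

lemma pois_prob_eq: "0 \<le> r \<Longrightarrow> pois_prob r k = r ^ k / fact k * exp (- r)"
  by (cases "r = 0") (auto simp: pois_prob_def)

lemma pois_prob_nonneg: "0 \<le> r \<Longrightarrow> 0 \<le> pois_prob r k"
  by (simp add: pois_prob_eq)

lemma pois_prob_sums_exp:
  assumes "0 \<le> r"
  shows "(\<lambda>k. of_real (pois_prob r k) * w ^ k) sums exp (of_real r * (w - 1) :: complex)"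
proof -
  have "(\<lambda>k. exp (- of_real r) * ((of_real r * w) ^ k /\<^sub>R fact k))
      sums (exp (- of_real r) * exp (of_real r * w))"
    by (intro sums_mult exp_converges)
  moreover have "exp (- of_real r) * exp (of_real r * w) = exp (of_real r * (w - 1) :: complex)"
    by (simp add: exp_add[symmetric] algebra_simps)
  moreover have "exp (- of_real r) * ((of_real r * w) ^ k /\<^sub>R fact k)
      = of_real (pois_prob r k) * w ^ k" for k
    using assms by (simp add: pois_prob_eq power_mult_distrib scaleR_conv_of_real field_simps
        flip: exp_of_real)
  ultimately show ?thesis
    by simp
qed

lemma pois_prob_sums_1: "0 \<le> r \<Longrightarrow> (\<lambda>k. pois_prob r k) sums 1"
  using pois_prob_sums_exp[of r 1] by (simp add: sums_of_real_iff[where 'a=complex, symmetric])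

lemma sum_pois_prob_le_1:
  assumes "finite A" "0 \<le> r"
  shows "(\<Sum>k\<in>A. pois_prob r k) \<le> 1"
  using sum_le_suminf[OF sums_summable[OF pois_prob_sums_1] assms(1)] pois_prob_sums_1 assms(2)
  by (simp add: pois_prob_nonneg sums_iff)

lemma pois_prob_le_1: "0 \<le> r \<Longrightarrow> pois_prob r k \<le> 1"
  using sum_pois_prob_le_1[of "{k}" r] by simp

locale inarch = prob_space M for M :: "'a measure" +
  fixes Y :: "int \<Rightarrow> 'a \<Rightarrow> nat" and lam :: "int \<Rightarrow> 'a \<Rightarrow> real" and a b0 :: real
  assumes a_nonneg: "0 \<le> a" and b0_nonneg: "0 \<le> b0"
    and measurable_Y [measurable]: "\<And>t. Y t \<in> measurable M (count_space UNIV)"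
    and lam_eq: "\<And>t x. x \<in> space M \<Longrightarrow> lam t x = a * real (Y (t - 1) x) + b0"
    and cond_pois: "\<And>t k. AE x in M.
          real_cond_exp M (past M Y lam t) (indicator {x \<in> space M. Y t x = k}) x
            = pois_prob (lam t x) k"
begin

lemma measurable_lam [measurable]: "lam t \<in> borel_measurable M"
  using measurable_cong[of M "lam t" "\<lambda>x. a * real (Y (t - 1) x) + b0"] lam_eq by simp

lemma lam_nonneg: "x \<in> space M \<Longrightarrow> 0 \<le> lam t x"
  using a_nonneg b0_nonneg by (simp add: lam_eq)

lemma measurable_Y_comp [measurable]: "(\<lambda>x. f (Y t x)) \<in> borel_measurable M"
  using measurable_compose[OF measurable_Y[of t], of f borel] by simp

definition past_generators :: "int \<Rightarrow> 'a set set" where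
  "past_generators t = (\<Union>s\<in>{..<t}.
     {Y s -` A \<inter> space M | A. True} \<union> {lam s -` B \<inter> space M | B. B \<in> sets borel})"

lemma past_eq: "past M Y lam t = sigma (space M) (past_generators t)"
  unfolding past_def past_generators_def ..

lemma past_generators_subset: "past_generators t \<subseteq> sets M"
  by (auto simp: past_generators_def)

lemma sets_past: "sets (past M Y lam t) = sigma_sets (space M) (past_generators t)"
  unfolding past_eq using past_generators_subset sets.sets_into_space
  by (intro sets_measure_of) blast

lemma space_past [simp]: "space (past M Y lam t) = space M"
  unfolding past_eq using past_generators_subset sets.sets_into_space
  by (intro space_measure_of) blast

lemma subalgebra_past: "subalgebra M (past M Y lam t)"
  unfolding subalgebra_def
  using sets.sigma_sets_subset[OF past_generators_subset] by (simp add: sets_past)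

lemma sigma_finite_subalgebra_past: "sigma_finite_subalgebra M (past M Y lam t)"
proof -
  interpret finite_measure_subalgebra M "past M Y lam t"
    by unfold_locales (rule subalgebra_past)
  show ?thesis
    by (rule finite_measure_subalgebra_is_sigma_finite) unfold_locales
qed

lemma measurable_Y_past: "s < t \<Longrightarrow> Y s \<in> measurable (past M Y lam t) (count_space UNIV)"
  by (rule measurableI) (auto simp: sets_past past_generators_def intro!: sigma_sets.Basic)

lemma measurable_pois_prob_lam [measurable]: "(\<lambda>x. pois_prob (lam t x) k) \<in> borel_measurable M"
proof -
  have "(\<lambda>x. lam t x ^ k / fact k * exp (- lam t x)) \<in> borel_measurable M"
    by measurable
  then show ?thesis
    by (rule measurable_cong[THEN iffD1, rotated]) (simp add: lam_nonneg pois_prob_eq)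
qed

lemma integral_mult_indicator_Y_eq:
  fixes f :: "'a \<Rightarrow> real"
  assumes f: "f \<in> borel_measurable (past M Y lam t)" and int: "integrable M f"
  shows "(\<integral>x. f x * indicator {x \<in> space M. Y t x = k} x \<partial>M) = (\<integral>x. f x * pois_prob (lam t x) k \<partial>M)"
proof -
  interpret sigma_finite_subalgebra M "past M Y lam t"
    by (rule sigma_finite_subalgebra_past)
  have [measurable]: "f \<in> borel_measurable M"
    using measurable_from_subalg[OF subalgebra_past f] .
  have "integrable M (\<lambda>x. f x * indicator {x \<in> space M. Y t x = k} x)"
    by (rule Bochner_Integration.integrable_bound[OF int]) (auto simp: indicator_def)
  then have "(\<integral>x. f x * indicator {x \<in> space M. Y t x = k} x \<partial>M)
      = (\<integral>x. f x * real_cond_exp M (past M Y lam t) (indicator {x \<in> space M. Y t x = k}) x \<partial>M)"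
    using f by (simp add: real_cond_exp_intg(2))
  also have "\<dots> = (\<integral>x. f x * pois_prob (lam t x) k \<partial>M)"
    using cond_pois[of t k] by (intro integral_cong_AE) auto
  finally show ?thesis .
qed

lemma integral_mult_indicator_Y_eq_complex:
  fixes g :: "'a \<Rightarrow> complex"
  assumes g: "g \<in> borel_measurable (past M Y lam t)" and int: "integrable M g"
  shows "(\<integral>x. g x * indicator {x \<in> space M. Y t x = k} x \<partial>M) = (\<integral>x. g x * pois_prob (lam t x) k \<partial>M)"
proof -
  have [measurable]: "g \<in> borel_measurable M"
    using measurable_from_subalg[OF subalgebra_past g] .
  have int_ind: "integrable M (\<lambda>x. g x * indicator {x \<in> space M. Y t x = k} x)"
    by (rule Bochner_Integration.integrable_bound[OF int]) (auto simp: indicator_def)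
  have int_pois: "integrable M (\<lambda>x. g x * pois_prob (lam t x) k)"
    by (rule Bochner_Integration.integrable_bound[OF int])
      (auto simp: norm_mult lam_nonneg pois_prob_nonneg pois_prob_le_1 intro!: mult_left_le)
  have Re: "(\<lambda>x. Re (g x)) \<in> borel_measurable (past M Y lam t)"
    and Im: "(\<lambda>x. Im (g x)) \<in> borel_measurable (past M Y lam t)"
    using g by measurable
  note real_eqs = integral_mult_indicator_Y_eq[OF Re integrable_Re[OF int], of k]
    integral_mult_indicator_Y_eq[OF Im integrable_Im[OF int], of k]
  have "Re (g x * indicator A x) = Re (g x) * indicator A x"
    and "Im (g x * indicator A x) = Im (g x) * indicator A x"
    for x and A :: "'a set"
    by (simp_all split: split_indicator)
  then show ?thesis
    using real_eqs
    by (intro complex_eqI) (simp_all flip: integral_Re[OF int_ind] integral_Re[OF int_pois]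
        integral_Im[OF int_ind] integral_Im[OF int_pois])
qed

lemma sums_integral_indicator_Y:
  fixes g :: "'a \<Rightarrow> complex"
  assumes [measurable]: "g \<in> borel_measurable M"
    and g_le: "\<And>x. x \<in> space M \<Longrightarrow> cmod (g x) \<le> 1" and w: "Re w \<le> 0"
  shows "(\<lambda>k. \<integral>x. g x * exp (w * of_nat k) * indicator {x \<in> space M. Y t x = k} x \<partial>M)
    sums (\<integral>x. g x * exp (w * of_nat (Y t x)) \<partial>M)"
proof (rule integral_sums_dominated[where w="\<lambda>_. 1"])
  have le: "cmod (g x * exp (w * of_nat k)) \<le> 1" if "x \<in> space M" for x k
    using g_le[OF that] w by (simp add: norm_mult mult_le_one mult_nonpos_nonneg)
  have single: "(\<lambda>k. g x * exp (w * of_nat k) * indicator {x \<in> space M. Y t x = k} x)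
      = (\<lambda>k. if k = Y t x then g x * exp (w * of_nat k) else 0)" if "x \<in> space M" for x
    using that by (auto simp: indicator_def)
  show "integrable M (\<lambda>x. g x * exp (w * of_nat k) * indicator {x \<in> space M. Y t x = k} x)" for k
    using le by (intro integrable_const_bound[where B=1]) (auto split: split_indicator)
  show "AE x in M. (\<lambda>k. g x * exp (w * of_nat k) * indicator {x \<in> space M. Y t x = k} x)
      sums (g x * exp (w * of_nat (Y t x)))"
    using single sums_single by (intro AE_I2) simp
  show "AE x in M. norm (\<Sum>k<N. g x * exp (w * of_nat k) * indicator {x \<in> space M. Y t x = k} x)
      \<le> 1" for N
  proof (rule AE_I2)
    fix x assume x: "x \<in> space M"
    then show "norm (\<Sum>k<N. g x * exp (w * of_nat k) * indicator {x \<in> space M. Y t x = k} x) \<le> 1"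
      unfolding single[OF x] sum.delta[OF finite_lessThan] using le by simp
  qed
qed simp_all

lemma sums_integral_pois_prob:
  fixes g :: "'a \<Rightarrow> complex"
  assumes [measurable]: "g \<in> borel_measurable M"
    and g_le: "\<And>x. x \<in> space M \<Longrightarrow> cmod (g x) \<le> 1" and w: "Re w \<le> 0"
  shows "(\<lambda>k. \<integral>x. g x * exp (w * of_nat k) * pois_prob (lam t x) k \<partial>M)
    sums (\<integral>x. g x * exp (of_real (lam t x) * (exp w - 1)) \<partial>M)"
proof (rule integral_sums_dominated[where w="\<lambda>_. 1"])
  have le: "cmod (g x * exp (w * of_nat k)) \<le> 1" if "x \<in> space M" for x k
    using g_le[OF that] w by (simp add: norm_mult mult_le_one mult_nonpos_nonneg)
  show "integrable M (\<lambda>x. g x * exp (w * of_nat k) * pois_prob (lam t x) k)" for k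
    using g_le w by (intro integrable_const_bound[where B=1])
      (auto simp: norm_mult lam_nonneg pois_prob_nonneg pois_prob_le_1 mult_nonpos_nonneg
        intro!: AE_I2 mult_le_one)
  show "AE x in M. (\<lambda>k. g x * exp (w * of_nat k) * pois_prob (lam t x) k)
      sums (g x * exp (of_real (lam t x) * (exp w - 1)))"
  proof (rule AE_I2)
    fix x assume x: "x \<in> space M"
    have "(\<lambda>k. g x * (of_real (pois_prob (lam t x) k) * exp w ^ k))
        sums (g x * exp (of_real (lam t x) * (exp w - 1)))"
      using lam_nonneg[OF x] by (intro sums_mult pois_prob_sums_exp)
    then show "(\<lambda>k. g x * exp (w * of_nat k) * pois_prob (lam t x) k)
        sums (g x * exp (of_real (lam t x) * (exp w - 1)))"
      by (simp add: exp_of_nat_mult[symmetric] mult.commute mult.left_commute)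
  qed
  show "AE x in M. norm (\<Sum>k<N. g x * exp (w * of_nat k) * pois_prob (lam t x) k) \<le> 1" for N
  proof (rule AE_I2)
    fix x assume x: "x \<in> space M"
    have "norm (\<Sum>k<N. g x * exp (w * of_nat k) * pois_prob (lam t x) k)
        \<le> (\<Sum>k<N. pois_prob (lam t x) k)"
      using le[OF x] lam_nonneg[OF x] by (intro order_trans[OF norm_sum] sum_mono)
        (simp add: norm_mult pois_prob_nonneg mult_left_le_one_le)
    then show "norm (\<Sum>k<N. g x * exp (w * of_nat k) * pois_prob (lam t x) k) \<le> 1"
      using sum_pois_prob_le_1[of "{..<N}" "lam t x"] lam_nonneg[OF x] by simp
  qed
qed simp_all

lemma integral_mult_exp_Y_eq:
  fixes g :: "'a \<Rightarrow> complex"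
  assumes g: "g \<in> borel_measurable (past M Y lam t)"
    and g_le: "\<And>x. x \<in> space M \<Longrightarrow> cmod (g x) \<le> 1" and w: "Re w \<le> 0"
  shows "(\<integral>x. g x * exp (w * of_nat (Y t x)) \<partial>M)
    = (\<integral>x. g x * exp (of_real (lam t x) * (exp w - 1)) \<partial>M)"
proof -
  have g_M: "g \<in> borel_measurable M"
    using measurable_from_subalg[OF subalgebra_past g] .
  have "(\<integral>x. g x * exp (w * of_nat k) * indicator {x \<in> space M. Y t x = k} x \<partial>M)
      = (\<integral>x. g x * exp (w * of_nat k) * pois_prob (lam t x) k \<partial>M)" for k
  proof (rule integral_mult_indicator_Y_eq_complex)
    show "(\<lambda>x. g x * exp (w * of_nat k)) \<in> borel_measurable (past M Y lam t)"
      using g by measurable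
    show "integrable M (\<lambda>x. g x * exp (w * of_nat k))"
      using g_M g_le w by (intro integrable_const_bound[where B=1])
        (auto simp: norm_mult mult_le_one mult_nonpos_nonneg)
  qed
  moreover have "(\<lambda>k. \<integral>x. g x * exp (w * of_nat k) * indicator {x \<in> space M. Y t x = k} x \<partial>M)
      sums (\<integral>x. g x * exp (w * of_nat (Y t x)) \<partial>M)"
    using g_M g_le w by (rule sums_integral_indicator_Y)
  moreover have "(\<lambda>k. \<integral>x. g x * exp (w * of_nat k) * pois_prob (lam t x) k \<partial>M)
      sums (\<integral>x. g x * exp (of_real (lam t x) * (exp w - 1)) \<partial>M)"
    using g_M g_le w by (rule sums_integral_pois_prob)
  ultimately show ?thesis
    by (simp add: sums_unique2)
qed

definition phase :: "(nat \<Rightarrow> real) \<Rightarrow> nat \<Rightarrow> 'a \<Rightarrow> complex" where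
  "phase u m x = (\<Sum>t\<in>{1..<m}. \<i> * of_real (u t * real (Y (int t) x)))"

lemma measurable_phase_past: "phase u m \<in> borel_measurable (past M Y lam (int m))"
  unfolding phase_def
proof (intro borel_measurable_sum)
  fix t assume "t \<in> {1..<m}"
  then have "Y (int t) \<in> measurable (past M Y lam (int m)) (count_space UNIV)"
    by (intro measurable_Y_past) simp
  then show "(\<lambda>x. \<i> * of_real (u t * real (Y (int t) x))) \<in> borel_measurable (past M Y lam (int m))"
    by (rule measurable_compose) simp
qed

lemma phase_Suc: "1 \<le> m \<Longrightarrow> phase u (Suc m) x = phase u m x + \<i> * of_real (u m * real (Y (int m) x))"
  by (simp add: phase_def)

lemma integral_exp_phase_step:
  assumes "1 \<le> m" and w: "Re w \<le> 0"
  shows "(\<integral>x. exp (phase u (Suc m) x + w * of_nat (Y (int (Suc m)) x)) \<partial>M)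
    = exp (of_real b0 * (exp w - 1))
      * (\<integral>x. exp (phase u m x
          + (\<i> * of_real (u m) + of_real a * (exp w - 1)) * of_nat (Y (int m) x)) \<partial>M)"
proof -
  have g: "(\<lambda>x. exp (phase u (Suc m) x)) \<in> borel_measurable (past M Y lam (int (Suc m)))"
    using measurable_phase_past[of u "Suc m"] by measurable
  have "(\<integral>x. exp (phase u (Suc m) x + w * of_nat (Y (int (Suc m)) x)) \<partial>M)
      = (\<integral>x. exp (phase u (Suc m) x) * exp (w * of_nat (Y (int (Suc m)) x)) \<partial>M)"
    by (simp add: exp_add)
  also have "\<dots>
      = (\<integral>x. exp (phase u (Suc m) x) * exp (of_real (lam (int (Suc m)) x) * (exp w - 1)) \<partial>M)"
    using w by (intro integral_mult_exp_Y_eq[OF g]) (simp_all add: phase_def norm_exp_ii_sum)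
  also have "\<dots> = (\<integral>x. exp (of_real b0 * (exp w - 1)) * exp (phase u m x
      + (\<i> * of_real (u m) + of_real a * (exp w - 1)) * of_nat (Y (int m) x)) \<partial>M)"
    using assms(1) by (intro Bochner_Integration.integral_cong refl)
      (simp add: lam_eq phase_Suc exp_add[symmetric] algebra_simps)
  finally show ?thesis
    by simp
qed

lemma integral_exp_sum_eq:
  assumes "1 \<le> n"
  shows "(\<integral>x. exp (\<Sum>t=1..n. \<i> * of_real (u t * real (Y (int t) x))) \<partial>M)
    = (\<integral>x. exp (backward_exponent a u n 1 * of_nat (Y 1 x)) \<partial>M)
      * exp (of_real b0 * (\<Sum>t=2..n. exp (backward_exponent a u n t) - 1))"
proof -
  let ?z = "backward_exponent a u n"
  have invariant: "(\<integral>x. exp (\<Sum>t=1..n. \<i> * of_real (u t * real (Y (int t) x))) \<partial>M)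
    = (\<integral>x. exp (phase u m x + ?z m * of_nat (Y (int m) x)) \<partial>M)
      * exp (of_real b0 * (\<Sum>t\<in>{m<..n}. exp (?z t) - 1))" if "1 \<le> m" "m \<le> n" for m
    using that(2,1)
  proof (induction rule: inc_induct)
    case base
    then show ?case
      by (simp add: phase_def backward_exponent_last atLeastLessThanSuc_atLeastAtMost[symmetric]
          sum.atLeastLessThan_Suc algebra_simps)
  next
    case (step m)
    let ?I = "\<lambda>m. \<integral>x. exp (phase u m x + ?z m * of_nat (Y (int m) x)) \<partial>M"
    have z_m: "?z m = \<i> * of_real (u m) + of_real a * (exp (?z (Suc m)) - 1)"
      using step by (simp add: backward_exponent_step)
    have "?I (Suc m) = exp (of_real b0 * (exp (?z (Suc m)) - 1)) * ?I m"
      unfolding z_m using step Re_backward_exponent_nonpos[OF a_nonneg]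
      by (intro integral_exp_phase_step) auto
    moreover have "{m<..n} = insert (Suc m) {Suc m<..n}"
      using step by auto
    then have "(\<Sum>t\<in>{m<..n}. exp (?z t) - 1)
        = (exp (?z (Suc m)) - 1) + (\<Sum>t\<in>{Suc m<..n}. exp (?z t) - 1)"
      by simp
    ultimately show ?case
      using step.IH step.hyps by (simp add: distrib_left exp_add mult_ac)
  qed
  moreover have "{1<..n} = {2..n}"
    by auto
  ultimately show ?thesis
    using invariant[of 1] assms by (simp add: phase_def)
qed

lemma char_trend_statistic_eq:
  assumes "1 \<le> n"
  shows "char (distr M borel (\<lambda>x. \<Sum>t=1..n. trend_weight n t * real (Y (int t) x))) s
    = (\<integral>x. exp (backward_exponent a (\<lambda>t. s * trend_weight n t) n 1 * of_nat (Y 1 x)) \<partial>M)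
      * exp (of_real b0 * (\<Sum>t=2..n. exp (backward_exponent a (\<lambda>t. s * trend_weight n t) n t) - 1))"
proof -
  have "char (distr M borel (\<lambda>x. \<Sum>t=1..n. trend_weight n t * real (Y (int t) x))) s
      = (\<integral>x. exp (\<Sum>t=1..n. \<i> * of_real (s * trend_weight n t * real (Y (int t) x))) \<partial>M)"
    unfolding char_def
    by (subst integral_distr)
      (auto intro!: Bochner_Integration.integral_cong simp: sum_distrib_left mult.assoc)
  then show ?thesis
    using integral_exp_sum_eq[OF assms, of "\<lambda>t. s * trend_weight n t"] by simp
qed

lemma char_trend_statistic_tendsto:
  assumes "a < 1"
  shows "(\<lambda>n. char (distr M borel (\<lambda>x. \<Sum>t=1..n. trend_weight n t * real (Y (int t) x))) s)
    \<longlonglongrightarrow> char (normal_law (b0 / (1 - a) ^ 3)) s"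
proof -
  define z where "z n = backward_exponent a (\<lambda>t. s * trend_weight n t) n" for n
  define E where "E n = (\<integral>x. exp (z n 1 * of_nat (Y 1 x)) \<partial>M)" for n
  note limits = backward_exponent_trend_limits[OF a_nonneg assms, of s, folded z_def]
  have "E \<longlonglongrightarrow> (\<integral>x. exp (0 * of_nat (Y 1 x)) \<partial>M)"
    unfolding E_def
  proof (rule integral_dominated_convergence[where w="\<lambda>_. 1"])
    show "AE x in M. (\<lambda>n. exp (z n 1 * of_nat (Y 1 x))) \<longlonglongrightarrow> exp (0 * of_nat (Y 1 x))"
      using limits(2) by (intro AE_I2 tendsto_intros)
    show "AE x in M. norm (exp (z n 1 * of_nat (Y 1 x))) \<le> 1" for n
      using Re_backward_exponent_nonpos[OF a_nonneg] by (simp add: z_def mult_nonpos_nonneg)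
  qed simp_all
  then have "(\<lambda>n. E n * exp (of_real b0 * (\<Sum>t=2..n. exp (z n t) - 1)))
      \<longlonglongrightarrow> 1 * exp (of_real b0 * - of_real (s\<^sup>2 / (2 * (1 - a) ^ 3)))"
    by (intro tendsto_intros limits(1)) (simp add: prob_space)
  also have "1 * exp (of_real b0 * - of_real (s\<^sup>2 / (2 * (1 - a) ^ 3)))
      = char (normal_law (b0 / (1 - a) ^ 3)) s"
    using assms b0_nonneg by (simp add: char_normal_law exp_of_real[symmetric] field_simps)
  finally have "(\<lambda>n. E n * exp (of_real b0 * (\<Sum>t=2..n. exp (z n t) - 1)))
      \<longlonglongrightarrow> char (normal_law (b0 / (1 - a) ^ 3)) s" .
  moreover have "eventually (\<lambda>n. E n * exp (of_real b0 * (\<Sum>t=2..n. exp (z n t) - 1))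
      = char (distr M borel (\<lambda>x. \<Sum>t=1..n. trend_weight n t * real (Y (int t) x))) s) sequentially"
    using eventually_ge_at_top[of 1]
    by eventually_elim (subst char_trend_statistic_eq, simp_all add: z_def E_def)
  ultimately show ?thesis
    by (rule Lim_transform_eventually)
qed

end

theorem proposition5p1:
  fixes M :: "'a measure" and Y :: "int \<Rightarrow> 'a \<Rightarrow> nat" and lam :: "int \<Rightarrow> 'a \<Rightarrow> real"
    and a b0 :: real
  assumes "prob_space M"
    and "0 < a" and "a < 1" and "0 \<le> b0"
    and meas: "\<And>t. Y t \<in> measurable M (count_space UNIV)"
    and lam_def: "\<And>t x. x \<in> space M \<Longrightarrow> lam t x = a * real (Y (t - 1) x) + b0"
    and cond_pois: "\<And>t k. AE x in M.
          real_cond_exp M (past M Y lam t) (indicator {x \<in> space M. Y t x = k}) x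
            = pois_prob (lam t x) k"
    and stationary: "\<And>h. distr M (PiM UNIV (\<lambda>_. count_space UNIV)) (\<lambda>x t. Y (t + h) x)
          = distr M (PiM UNIV (\<lambda>_. count_space UNIV)) (\<lambda>x t. Y t x)"
  shows "weak_conv_m
           (\<lambda>n. distr M borel (\<lambda>x. \<Sum>t=1..n. trend_weight n t * real (Y (int t) x)))
           (normal_law (b0 / (1 - a) ^ 3))"
proof -
  interpret inarch M Y lam a b0
    using assms by (intro inarch.intro inarch_axioms.intro) auto
  show ?thesis
  proof (rule levy_continuity)
    show "real_distribution (distr M borel (\<lambda>x. \<Sum>t=1..n. trend_weight n t * real (Y (int t) x)))"
      for n
      by (intro real_distribution_distr) measurable
    show "real_distribution (normal_law (b0 / (1 - a) ^ 3))"
      using assms by (intro real_distribution_normal_law) simp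
  qed (rule char_trend_statistic_tendsto[OF \<open>a < 1\<close>])
qed

end
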